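(* Let $X$ be a smooth projective complex variety of dimension $n$, $[\gamma_j]\in H^{n-j,n-j}(X,\mathbb{R})$ ($0\le j\le n$), $\mathcal{E}$ a vector bundle on $X$, $\delta_k\in\{-1,+1\}$, $1\le k\le n-1$, and $\|\cdot\|$ any norm on $H^{n-k,n-k}(X,\mathbb{R})$. The following are equivalent: (1) for all $c\in\overline{\mathrm{Eff}_k(X)}\setminus\{0\}$, $\delta_kP_c(\mathcal{E})>0$; (2) there is a constant $\epsilon>0$ such that for every subvariety $V\subset X$ of dimension $k$, $\delta_kP_V(\mathcal{E})\ge\epsilon\|\mathrm{cl}(V)\|$.
   Context: For $c\in H^{n-k,n-k}(X,\mathbb{R})$, $P_c(\mathcal{E})=\big(\sum_j[\gamma_j]\smile\mathrm{ch}(\mathcal{E})\smile c\big)\frown[X]$, and $P_V(\mathcal{E})=P_{\mathrm{cl}(V)}(\mathcal{E})$ with $\mathrm{cl}(V)$ the cycle class. $\mathrm{Eff}_k(X)\subset H^{n-k,n-k}(X,\mathbb{R})$ is the set of finite sums $\sum a_i\mathrm{cl}(V_i)$ with $a_i\ge0$ and $V_i\subset X$ subvarieties of dimension $k$; $\overline{\mathrm{Eff}_k(X)}$ is its closure. *)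

theory Defs
  imports "HOL-Analysis.Analysis"
begin

text \<open>The real vector space H^{n-k,n-k}(X,R) is modelled by a
finite-dimensional real vector space (type of class euclidean_space); subvarieties
of dimension k are indexed by an arbitrary type, with cycle class map cl.\<close>

definition Eff :: "('v \<Rightarrow> 'h::real_vector) \<Rightarrow> 'h set" where
  "Eff cl = {x. \<exists>I::'v set. \<exists>a::'v \<Rightarrow> real. finite I \<and> (\<forall>V\<in>I. a V \<ge> 0)
                 \<and> x = (\<Sum>V\<in>I. a V *\<^sub>R cl V)}"

definition is_norm :: "('h::real_vector \<Rightarrow> real) \<Rightarrow> bool" where
  "is_norm N \<longleftrightarrow> (\<forall>x y. N (x + y) \<le> N x + N y)
               \<and> (\<forall>c x. N (c *\<^sub>R x) = \<bar>c\<bar> * N x)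
               \<and> (\<forall>x. N x = 0 \<longrightarrow> x = 0)"

end

theory Submission
  imports Defs
begin

text \<open>Both conditions say that the linear form \<open>\<delta> P\<close> is bounded below by a positive
multiple of \<open>N\<close> on the closed cone \<open>closure (Eff cl)\<close>. Being a norm on a
finite-dimensional space, \<open>N\<close> is continuous and dominated by a multiple of the Euclidean
norm; so positivity of \<open>\<delta> P\<close> off the origin of the cone yields such a bound through the
positive minimum of \<open>\<delta> P\<close> on the compact intersection of the cone with the unit sphere.
Conversely, a bound \<open>\<epsilon> N (cl V) \<le> \<delta> P (cl V)\<close> on the generators passes to nonnegative
combinations by subadditivity and homogeneity of \<open>N\<close>, and to the closure by continuity.\<close>

lemma is_norm_zero:
  assumes "is_norm N"
  shows "N 0 = 0"
  using assms unfolding is_norm_def by (metis abs_0 mult_zero_left scaleR_zero_left)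

lemma is_norm_scaleR:
  assumes "is_norm N"
  shows "N (c *\<^sub>R x) = \<bar>c\<bar> * N x"
  using assms unfolding is_norm_def by blast

lemma is_norm_minus:
  assumes "is_norm N"
  shows "N (- x) = N x"
  using assms unfolding is_norm_def by (metis abs_minus_cancel abs_one mult_1 scaleR_minus1_left)

lemma is_norm_nonneg:
  assumes "is_norm N"
  shows "N x \<ge> 0"
proof -
  have "N 0 \<le> N x + N (- x)"
    using assms unfolding is_norm_def by (metis add.right_inverse)
  then show ?thesis
    using is_norm_zero[OF assms] is_norm_minus[OF assms] by simp
qed

lemma is_norm_pos:
  assumes "is_norm N" "x \<noteq> 0"
  shows "N x > 0"
  using assms is_norm_nonneg[OF assms(1), of x] unfolding is_norm_def by force

lemma is_norm_sum_le:
  assumes "is_norm N"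
  shows "N (sum f I) \<le> (\<Sum>i\<in>I. N (f i))"
proof (induction I rule: infinite_finite_induct)
  case (insert i I)
  then show ?case
    using assms unfolding is_norm_def by (smt (verit) sum.insert)
qed (use is_norm_zero[OF assms] in simp_all)

lemma is_norm_le_norm:
  fixes N :: "'a::euclidean_space \<Rightarrow> real"
  assumes "is_norm N"
  obtains M where "M > 0" "\<And>x. N x \<le> M * norm x"
proof
  let ?M = "1 + (\<Sum>b\<in>Basis. N b)"
  show "?M > 0"
    using sum_nonneg[of Basis N] is_norm_nonneg[OF assms] by force
  fix x :: 'a
  have "N x = N (\<Sum>b\<in>Basis. (x \<bullet> b) *\<^sub>R b)"
    by (simp add: euclidean_representation)
  also have "\<dots> \<le> (\<Sum>b\<in>Basis. \<bar>x \<bullet> b\<bar> * N b)"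
    using is_norm_sum_le[OF assms, of "\<lambda>b. (x \<bullet> b) *\<^sub>R b" Basis]
    by (simp add: is_norm_scaleR[OF assms])
  also have "\<dots> \<le> (\<Sum>b\<in>Basis. norm x * N b)"
    by (intro sum_mono mult_right_mono Basis_le_norm is_norm_nonneg[OF assms])
  also have "\<dots> = norm x * (\<Sum>b\<in>Basis. N b)"
    by (simp add: sum_distrib_left)
  also have "\<dots> \<le> ?M * norm x"
    by (simp add: algebra_simps)
  finally show "N x \<le> ?M * norm x" .
qed

lemma is_norm_continuous_on:
  fixes N :: "'a::euclidean_space \<Rightarrow> real"
  assumes "is_norm N"
  shows "continuous_on S N"
proof -
  obtain M where M: "M > 0" "\<And>x. N x \<le> M * norm x"
    using is_norm_le_norm[OF assms] by blast
  have "\<bar>N x - N y\<bar> \<le> M * dist x y" for x y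
  proof -
    have "N x \<le> N (x - y) + N y" "N y \<le> N (y - x) + N x"
      using assms unfolding is_norm_def by (metis diff_add_cancel)+
    moreover have "N (y - x) = N (x - y)"
      using is_norm_minus[OF assms, of "x - y"] by simp
    ultimately have "\<bar>N x - N y\<bar> \<le> N (x - y)" by linarith
    also have "\<dots> \<le> M * dist x y"
      using M(2)[of "x - y"] by (simp add: dist_norm)
    finally show ?thesis .
  qed
  then show ?thesis
    unfolding continuous_on_iff dist_real_def using M(1)
    by (metis mult.commute order.strict_trans1
        pos_less_divide_eq zero_less_divide_iff)
qed

lemma linear_ge_norm_on_closed_cone:
  fixes Q :: "'a::euclidean_space \<Rightarrow> real"
  assumes "linear Q" "closed C" "cone C"
    and pos: "\<And>x. x \<in> C \<Longrightarrow> x \<noteq> 0 \<Longrightarrow> Q x > 0"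
  obtains e where "e > 0" "\<And>x. x \<in> C \<Longrightarrow> e * norm x \<le> Q x"
proof -
  let ?S = "C \<inter> sphere 0 1"
  have "compact ?S"
    using assms(2) by (intro closed_Int_compact) auto
  have "continuous_on ?S Q"
    using assms(1) by (simp add: linear_continuous_on linear_conv_bounded_linear)
  obtain e where e: "e > 0" "\<And>u. u \<in> ?S \<Longrightarrow> e \<le> Q u"
  proof (cases "?S = {}")
    case False
    then obtain y where y: "y \<in> ?S" "\<And>u. u \<in> ?S \<Longrightarrow> Q y \<le> Q u"
      using continuous_attains_inf[OF \<open>compact ?S\<close>] \<open>continuous_on ?S Q\<close> by blast
    then have "y \<noteq> 0" by auto
    with y pos show ?thesis by (intro that[of "Q y"]) auto
  qed (auto intro: that[of 1])
  have "e * norm x \<le> Q x" if "x \<in> C" for x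
  proof (cases "x = 0")
    case True
    then show ?thesis using linear_0[OF assms(1)] by simp
  next
    case False
    let ?u = "(1 / norm x) *\<^sub>R x"
    have "?u \<in> ?S"
      using \<open>cone C\<close> \<open>x \<in> C\<close> False by (simp add: cone_def)
    then have "e \<le> Q x / norm x"
      using e(2) linear_scale[OF assms(1)] by fastforce
    then show ?thesis
      using False by (simp add: field_simps)
  qed
  with e(1) show ?thesis by (rule that)
qed

lemma linear_ge_is_norm_on_closed_cone:
  fixes Q :: "'a::euclidean_space \<Rightarrow> real"
  assumes "linear Q" "closed C" "cone C" "is_norm N"
    and pos: "\<And>x. x \<in> C \<Longrightarrow> x \<noteq> 0 \<Longrightarrow> Q x > 0"
  obtains e where "e > 0" "\<And>x. x \<in> C \<Longrightarrow> e * N x \<le> Q x"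
proof -
  obtain e where "e > 0" and e: "\<And>x. x \<in> C \<Longrightarrow> e * norm x \<le> Q x"
    using linear_ge_norm_on_closed_cone[OF assms(1-3) pos] by blast
  obtain M where "M > 0" and M: "\<And>x. N x \<le> M * norm x"
    using is_norm_le_norm[OF assms(4)] by blast
  have "e / M * N x \<le> Q x" if "x \<in> C" for x
  proof -
    have "e / M * N x \<le> e / M * (M * norm x)"
      using M \<open>e > 0\<close> \<open>M > 0\<close> by (intro mult_left_mono) auto
    also have "\<dots> \<le> Q x"
      using e[OF that] \<open>M > 0\<close> by simp
    finally show ?thesis .
  qed
  moreover have "e / M > 0"
    using \<open>e > 0\<close> \<open>M > 0\<close> by simp
  ultimately show ?thesis
    using that by blast
qed

lemma cl_in_Eff: "cl V \<in> Eff cl"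
  unfolding Eff_def by (intro CollectI exI[of _ "{V}"] exI[of _ "\<lambda>_. 1"]) simp

lemma cone_Eff: "cone (Eff cl)"
  unfolding cone_def
proof (intro ballI allI impI)
  fix x and t :: real
  assume "x \<in> Eff cl" "t \<ge> 0"
  then obtain I a where "finite I" "\<forall>V\<in>I. a V \<ge> 0" "x = (\<Sum>V\<in>I. a V *\<^sub>R cl V)"
    unfolding Eff_def by blast
  with \<open>t \<ge> 0\<close> show "t *\<^sub>R x \<in> Eff cl"
    unfolding Eff_def
    by (intro CollectI exI[of _ I] exI[of _ "\<lambda>V. t * a V"]) (simp add: scaleR_sum_right)
qed

lemma closure_Eff_dominated_if_generators:
  fixes Q :: "'h::euclidean_space \<Rightarrow> real"
  assumes "linear Q" "is_norm N" "e \<ge> 0"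
    and generators: "\<And>V. e * N (cl V) \<le> Q (cl V)"
  shows "closure (Eff cl) \<subseteq> {x. e * N x \<le> Q x}"
proof (rule closure_minimal)
  show "Eff cl \<subseteq> {x. e * N x \<le> Q x}"
  proof
    fix x assume "x \<in> Eff cl"
    then obtain I a where a: "\<forall>V\<in>I. a V \<ge> 0" and x: "x = (\<Sum>V\<in>I. a V *\<^sub>R cl V)"
      unfolding Eff_def by blast
    have "e * N x \<le> e * (\<Sum>V\<in>I. N (a V *\<^sub>R cl V))"
      unfolding x by (intro mult_left_mono is_norm_sum_le assms(2,3))
    also have "\<dots> = (\<Sum>V\<in>I. a V * (e * N (cl V)))"
      using a by (auto simp: sum_distrib_left is_norm_scaleR[OF assms(2)] intro!: sum.cong)
    also have "\<dots> \<le> (\<Sum>V\<in>I. a V * Q (cl V))"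
      using a generators by (intro sum_mono mult_left_mono) auto
    also have "\<dots> = Q x"
      by (simp add: x linear_sum[OF assms(1)] linear_scale[OF assms(1)])
    finally show "x \<in> {x. e * N x \<le> Q x}" by simp
  qed
  show "closed {x. e * N x \<le> Q x}"
    using is_norm_continuous_on[OF assms(2)] assms(1)
    by (intro closed_Collect_le continuous_intros)
       (simp_all add: linear_continuous_on linear_conv_bounded_linear)
qed

theorem proposition4p2:
  fixes P :: "'h::euclidean_space \<Rightarrow> real"
    and cl :: "'v \<Rightarrow> 'h"
    and N :: "'h \<Rightarrow> real"
    and \<delta> :: real
  assumes "linear P"
    and "\<delta> \<in> {-1, 1}"
    and "is_norm N"
  shows "(\<forall>c \<in> closure (Eff cl) - {0}. \<delta> * P c > 0)
     \<longleftrightarrow> (\<exists>\<epsilon>>0. \<forall>V. \<delta> * P (cl V) \<ge> \<epsilon> * N (cl V))"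
proof -
  \<comment> \<open>Only the linearity of \<open>\<delta> P\<close> matters.\<close>
  have Q: "linear (\<lambda>x. \<delta> * P x)"
    using assms(1) by (simp add: linear_iff algebra_simps)
  show ?thesis
  proof
    assume "\<forall>c \<in> closure (Eff cl) - {0}. \<delta> * P c > 0"
    then obtain e where "e > 0"
      and e: "\<And>x. x \<in> closure (Eff cl) \<Longrightarrow> e * N x \<le> \<delta> * P x"
      using linear_ge_is_norm_on_closed_cone[OF Q closed_closure cone_closure[OF cone_Eff] assms(3)]
      by blast
    have "e * N (cl V) \<le> \<delta> * P (cl V)" for V
      by (rule e[OF closure_subset[THEN subsetD, OF cl_in_Eff]])
    with \<open>e > 0\<close> show "\<exists>\<epsilon>>0. \<forall>V. \<delta> * P (cl V) \<ge> \<epsilon> * N (cl V)"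
      by blast
  next
    assume "\<exists>\<epsilon>>0. \<forall>V. \<delta> * P (cl V) \<ge> \<epsilon> * N (cl V)"
    then obtain e where "e > 0" and "\<And>V. e * N (cl V) \<le> \<delta> * P (cl V)"
      by blast
    then have dominated: "closure (Eff cl) \<subseteq> {x. e * N x \<le> \<delta> * P x}"
      by (intro closure_Eff_dominated_if_generators[OF Q assms(3)]) simp_all
    show "\<forall>c \<in> closure (Eff cl) - {0}. \<delta> * P c > 0"
    proof
      fix c assume "c \<in> closure (Eff cl) - {0}"
      then have "0 < e * N c" "e * N c \<le> \<delta> * P c"
        using dominated is_norm_pos[OF assms(3)] \<open>e > 0\<close> by auto
      then show "\<delta> * P c > 0" by linarith
    qed
  qed
qed

end
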